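(* Let $H=(V,E)$ be a finite hypergraph with $E=\{e_1,\dots,e_{|E|}\}$, let $w:E\to\mathbb{Z}_2$ and $v\in V$, and define $\Lambda_v(|\psi_w\rangle)=|l_v(w_{e_1})\cdots l_v(w_{e_{|E|}})\rangle$, where $l_v(w_e)=\overline{w(e)}$ if $v\in e$ and $l_v(w_e)=w(e)$ otherwise. (i) If $|\psi_w\rangle\in\Pi$, then $\Lambda_v(|\psi_w\rangle)\in\Pi$. (ii) If $|\psi_w\rangle\in\mathcal{H}(E)\setminus\Pi$, then $\Lambda_v(|\psi_w\rangle)\in\mathcal{H}(E)\setminus\Pi$.
   Context: A hypergraph is $H=(V,E)$ with $V$ finite and $E\subset\mathcal{P}(V)$. For $p\in\mathbb{Z}_2$, $\overline{p}=p\oplus1$. For $w:E\to\mathbb{Z}_2$, $|\psi_w\rangle=|w(e_1)\cdots w(e_{|E|})\rangle$, and $\mathcal{H}(E)$ is the set of all such states. $w$ is a parity weight if there is $f:V\to\mathbb{Z}_2$ with $\overline{w(e)}=\bigoplus_{u\in e}f(u)$ for all $e\in E$; $\Pi=\{|\psi_w\rangle : w\text{ a parity weight}\}$. *)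

theory Defs
  imports Main "HOL-Library.Z2"
begin

text \<open>Z_2 is the two-element field bit; p xor 1 is p + 1.
 The edges E = {e_1,...,e_|E|} are enumerated by a distinct list es with set es = E.\<close>

definition parity_weight :: "'a set set \<Rightarrow> ('a set \<Rightarrow> bit) \<Rightarrow> bool" where
  "parity_weight E w \<longleftrightarrow> (\<exists>f :: 'a \<Rightarrow> bit. \<forall>e\<in>E. w e + 1 = (\<Sum>u\<in>e. f u))"

definition psi :: "'a set list \<Rightarrow> ('a set \<Rightarrow> bit) \<Rightarrow> bit list" where
  "psi es w = map w es"

definition Hstates :: "'a set list \<Rightarrow> bit list set" where
  "Hstates es = {psi es w | w. True}"

definition PiStates :: "'a set list \<Rightarrow> bit list set" where
  "PiStates es = {psi es w | w. parity_weight (set es) w}"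

definition Lambda :: "'a set list \<Rightarrow> 'a \<Rightarrow> bit list \<Rightarrow> bit list" where
  "Lambda es v \<psi> = map2 (\<lambda>e b. if v \<in> e then b + 1 else b) es \<psi>"

end

theory Submission
  imports Defs
begin

text \<open>Lambda v complements the weight of exactly the edges through v, which is also what
  toggling the value at v of a parity witness f does to the sums of f over the edges. Hence
  Lambda v maps Pi into Pi; being an involution on H(E), it also maps H(E) - Pi into itself.\<close>

definition flip_at :: "'a \<Rightarrow> ('a set \<Rightarrow> bit) \<Rightarrow> 'a set \<Rightarrow> bit" where
  "flip_at v w e = (if v \<in> e then w e + 1 else w e)"

lemma flip_at_flip_at [simp]: "flip_at v (flip_at v w) = w"
  by (auto simp: fun_eq_iff flip_at_def)

lemma Lambda_psi: "Lambda es v (psi es w) = psi es (flip_at v w)"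
  unfolding Lambda_def psi_def flip_at_def by (induction es) auto

lemma psi_in_Hstates: "psi es w \<in> Hstates es"
  unfolding Hstates_def by blast

lemma parity_weight_cong:
  "(\<And>e. e \<in> E \<Longrightarrow> w1 e = w2 e) \<Longrightarrow> parity_weight E w1 = parity_weight E w2"
  unfolding parity_weight_def by auto

lemma psi_in_PiStates_iff: "psi es w \<in> PiStates es \<longleftrightarrow> parity_weight (set es) w"
proof
  assume "psi es w \<in> PiStates es"
  then obtain w' where "psi es w = psi es w'" and "parity_weight (set es) w'"
    unfolding PiStates_def by auto
  then show "parity_weight (set es) w"
    using parity_weight_cong[of "set es" w w'] by (simp add: psi_def map_eq_conv)
qed (auto simp: PiStates_def)

lemma sum_fun_upd_add:
  fixes f :: "'a \<Rightarrow> 'b::comm_monoid_add"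
  assumes "finite A"
  shows "(\<Sum>u\<in>A. (f(v := f v + c)) u) = (\<Sum>u\<in>A. f u) + (if v \<in> A then c else 0)"
proof -
  have "(\<Sum>u\<in>A. (f(v := f v + c)) u) = (\<Sum>u\<in>A. f u + (if u = v then c else 0))"
    by (rule sum.cong) auto
  also have "\<dots> = (\<Sum>u\<in>A. f u) + (if v \<in> A then c else 0)"
    using assms by (simp add: sum.distrib)
  finally show ?thesis .
qed

lemma parity_weight_flip_at:
  assumes fin: "\<And>e. e \<in> E \<Longrightarrow> finite e" and "parity_weight E w"
  shows "parity_weight E (flip_at v w)"
proof -
  obtain f where f: "\<And>e. e \<in> E \<Longrightarrow> w e + 1 = (\<Sum>u\<in>e. f u)"
    using assms(2) unfolding parity_weight_def by blast
  have "flip_at v w e + 1 = (\<Sum>u\<in>e. (f(v := f v + 1)) u)" if "e \<in> E" for e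
    using f[OF that] sum_fun_upd_add[OF fin[OF that], of f v 1] by (simp add: flip_at_def)
  then show ?thesis
    unfolding parity_weight_def by blast
qed

lemma parity_weight_flip_at_iff:
  assumes "\<And>e. e \<in> E \<Longrightarrow> finite e"
  shows "parity_weight E (flip_at v w) \<longleftrightarrow> parity_weight E w"
  using parity_weight_flip_at[OF assms] flip_at_flip_at by metis

theorem lemma5:
  fixes V :: "'a set" and E :: "'a set set" and es :: "'a set list"
    and w :: "'a set \<Rightarrow> bit" and v :: 'a
  assumes "finite V" and "E \<subseteq> Pow V"
    and "distinct es" and "set es = E"
    and "v \<in> V"
  shows "(psi es w \<in> PiStates es \<longrightarrow> Lambda es v (psi es w) \<in> PiStates es)
       \<and> (psi es w \<in> Hstates es - PiStates es \<longrightarrow>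
            Lambda es v (psi es w) \<in> Hstates es - PiStates es)"
proof -
  have "finite e" if "e \<in> set es" for e
    using assms(1,2,4) that by (blast intro: finite_subset)
  then have "parity_weight (set es) (flip_at v w) \<longleftrightarrow> parity_weight (set es) w"
    by (rule parity_weight_flip_at_iff)
  then show ?thesis
    by (simp add: Lambda_psi psi_in_PiStates_iff psi_in_Hstates)
qed

end
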